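(* Let $S$ be a group. Let $\{G_j\}_{j\in J}$ be a family of proper subgroups $G_j\subset S$ containing exactly one subgroup from each conjugacy class of proper non-normal subgroups of $S$, and let $\{N_m\}_{m\in M}$ be the family of all proper normal subgroups of $S$. Then for every left $S$-act $A$, the geometric equivalence class $[A]=\{B : B \text{ is an } S\text{-act}, B\overset{\triangle}{\sim} A\}$ has a representation of exactly one of the following three types: (i) $[A]=\big[\coprod_{k\in K}\overline{G_k}^{(\ast)2}\amalg\coprod_{t\in T}\overline{G_t}\amalg\coprod_{l\in L}\overline{N_l}\big]$ for some subsets $K,T\subseteq J$ with $K\cap T=\emptyset$ and $L\subseteq M$; (ii) $[A]=\big[\coprod_{k\in K}\overline{G_k}\amalg\coprod_{l\in L}\overline{N_l}\amalg z\big]$ for some $K\subseteq J$, $L\subseteq M$; (iii) $[A]=\big[\coprod_{k\in K}\overline{G_k}\amalg\coprod_{l\in L}\overline{N_l}\amalg z_1\amalg z_2\big]$ for some $K\subseteq J$, $L\subseteq M$. (That is, $A$ is geometrically equivalent to an $S$-act of one of these forms, and $[A]$ does not admit representations of two different types.)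
   Context: For a monoid $S$, a left $S$-act is a nonempty set $A$ with a map $S\times A\to A$, $(s,a)\mapsto sa$, such that $1a=a$ and $(st)a=s(ta)$; homomorphisms are maps $f$ with $f(sa)=sf(a)$. Coproducts $\amalg$ of $S$-acts are disjoint unions with the induced action. For a nonempty finite set $X$, $F_X=\coprod_{x\in X}S_x$ is the free $S$-act on $X$ (a disjoint union of copies of the left regular act ${}_SS$). For an $S$-act $G$ and a binary relation $T\subseteq F_X\times F_X$, let $T'_G=\{\mu:F_X\to G \text{ homomorphism} : T\subseteq \ker\mu\}$ and $T''_G=\bigcap_{\mu\in T'_G}\ker\mu$ (the empty intersection being $F_X\times F_X$). Two $S$-acts $G_1,G_2$ are geometrically equivalent, $G_1\overset{\triangle}{\sim}G_2$, iff $T''_{G_1}=T''_{G_2}$ for every nonempty finite $X$ and every relation $T\subseteq F_X\times F_X$. For a subgroup $H$ of a group $S$, $\overline{H}={}_SS/H$ is the $S$-act of left cosets $tH$ with $s\cdot tH=stH$. For an $S$-act $A$, $A^{(\ast)I}=\coprod_{i\in I}A_i$ with each $A_i=A$; in particular $A^{(\ast)2}=A\amalg A$. The symbols $z,z_1,z_2$ denote one-element $S$-acts. *)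

theory Defs
  imports "HOL-Algebra.Algebra"
begin

definition is_act :: "('g, 'm) monoid_scheme \<Rightarrow> 'a set \<Rightarrow> ('g \<Rightarrow> 'a \<Rightarrow> 'a) \<Rightarrow> bool" where
  "is_act S A act \<longleftrightarrow> A \<noteq> {} \<and>
     (\<forall>s\<in>carrier S. \<forall>a\<in>A. act s a \<in> A) \<and>
     (\<forall>a\<in>A. act \<one>\<^bsub>S\<^esub> a = a) \<and>
     (\<forall>s\<in>carrier S. \<forall>t\<in>carrier S. \<forall>a\<in>A. act (s \<otimes>\<^bsub>S\<^esub> t) a = act s (act t a))"

definition act_hom :: "('g, 'm) monoid_scheme \<Rightarrow> 'a set \<Rightarrow> ('g \<Rightarrow> 'a \<Rightarrow> 'a)
    \<Rightarrow> 'b set \<Rightarrow> ('g \<Rightarrow> 'b \<Rightarrow> 'b) \<Rightarrow> ('a \<Rightarrow> 'b) \<Rightarrow> bool" where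
  "act_hom S A actA B actB f \<longleftrightarrow> (\<forall>a\<in>A. f a \<in> B) \<and>
     (\<forall>s\<in>carrier S. \<forall>a\<in>A. f (actA s a) = actB s (f a))"

text \<open>Free S-act on V: the disjoint union of copies S_x of the left regular act,
  realised as V \<times> S with s(x,t) = (x, s t).\<close>
definition free_act_carrier :: "('g, 'm) monoid_scheme \<Rightarrow> 'x set \<Rightarrow> ('x \<times> 'g) set" where
  "free_act_carrier S V = Sigma V (\<lambda>_. carrier S)"

definition free_act :: "('g, 'm) monoid_scheme \<Rightarrow> 'g \<Rightarrow> ('x \<times> 'g) \<Rightarrow> ('x \<times> 'g)" where
  "free_act S s p = (fst p, s \<otimes>\<^bsub>S\<^esub> snd p)"

text \<open>T''_G: intersection of the kernels of all homomorphisms F_X \<rightarrow> G whose kernel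
  contains T (the empty intersection being F_X \<times> F_X).\<close>
definition closure_rel :: "('g, 'm) monoid_scheme \<Rightarrow> 'x set \<Rightarrow> 'a set \<Rightarrow> ('g \<Rightarrow> 'a \<Rightarrow> 'a)
    \<Rightarrow> (('x \<times> 'g) \<times> ('x \<times> 'g)) set \<Rightarrow> (('x \<times> 'g) \<times> ('x \<times> 'g)) set" where
  "closure_rel S V G actG T =
     {(p, q). p \<in> free_act_carrier S V \<and> q \<in> free_act_carrier S V \<and>
        (\<forall>\<mu>. act_hom S (free_act_carrier S V) (free_act S) G actG \<mu> \<and>
              (\<forall>(a, b)\<in>T. \<mu> a = \<mu> b) \<longrightarrow> \<mu> p = \<mu> q)}"

text \<open>Geometric equivalence of two S-acts (finite sets V are taken to be finite
  sets of natural numbers, which covers every finite set up to bijection).\<close>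
definition geom_equiv :: "('g, 'm) monoid_scheme \<Rightarrow> 'a set \<Rightarrow> ('g \<Rightarrow> 'a \<Rightarrow> 'a)
    \<Rightarrow> 'b set \<Rightarrow> ('g \<Rightarrow> 'b \<Rightarrow> 'b) \<Rightarrow> bool" where
  "geom_equiv S G1 act1 G2 act2 \<longleftrightarrow> is_act S G1 act1 \<and> is_act S G2 act2 \<and>
     (\<forall>V :: nat set. finite V \<and> V \<noteq> {} \<longrightarrow>
        (\<forall>T. T \<subseteq> free_act_carrier S V \<times> free_act_carrier S V \<longrightarrow>
           closure_rel S V G1 act1 T = closure_rel S V G2 act2 T))"

definition left_cosets_of :: "('g, 'm) monoid_scheme \<Rightarrow> 'g set \<Rightarrow> 'g set set" where
  "left_cosets_of S H = (\<lambda>t. t <#\<^bsub>S\<^esub> H) ` carrier S"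

definition conjugate_subgroups :: "('g, 'm) monoid_scheme \<Rightarrow> 'g set \<Rightarrow> 'g set \<Rightarrow> bool" where
  "conjugate_subgroups S H H' \<longleftrightarrow> (\<exists>g\<in>carrier S. H' = (g <#\<^bsub>S\<^esub> H) #>\<^bsub>S\<^esub> inv\<^bsub>S\<^esub> g)"

text \<open>The coproduct
   \<coprod>_{H\<in>K2} (S/H \<amalg> S/H) \<amalg> \<coprod>_{H\<in>K1} S/H \<amalg> \<coprod>_{N\<in>L} S/N \<amalg> (n one-element acts), n \<le> 2,
  realised as a tagged disjoint union: tags 0,1 = the two copies for K2, tag 2 = K1,
  tag 3 = L, tags 4,5 = the one-element acts z_1, z_2.\<close>
definition rep_carrier :: "('g, 'm) monoid_scheme \<Rightarrow> 'g set set \<Rightarrow> 'g set set \<Rightarrow> 'g set set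
    \<Rightarrow> nat \<Rightarrow> (nat \<times> 'g set \<times> 'g set) set" where
  "rep_carrier S K2 K1 L n =
     {(i, H, C) | i H C. i \<in> {0, 1} \<and> H \<in> K2 \<and> C \<in> left_cosets_of S H}
   \<union> {(2, H, C) | H C. H \<in> K1 \<and> C \<in> left_cosets_of S H}
   \<union> {(3, H, C) | H C. H \<in> L \<and> C \<in> left_cosets_of S H}
   \<union> {(i, {}, {}) | i. 4 \<le> i \<and> i < 4 + n}"

definition rep_act :: "('g, 'm) monoid_scheme \<Rightarrow> 'g \<Rightarrow> (nat \<times> 'g set \<times> 'g set) \<Rightarrow> (nat \<times> 'g set \<times> 'g set)" where
  "rep_act S s x = (case x of (i, H, C) \<Rightarrow> if i \<le> 3 then (i, H, s <#\<^bsub>S\<^esub> C) else (i, H, C))"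

end

theory Submission
  imports Defs
begin

text \<open>
  If the points of \<open>M\<close> are separated by homomorphisms into \<open>N\<close>, then \<open>T''\<close> computed in \<open>N\<close> is
  contained in \<open>T''\<close> computed in \<open>M\<close>: a homomorphism into \<open>M\<close> distinguishing two elements can be
  composed with a separating one. So two acts are geometrically equivalent as soon as each
  separates the points of the other. Over a group, a homomorphism out of an orbit \<open>S x\<close> is
  determined by the image \<open>y\<close> of \<open>x\<close>, and \<open>y\<close> may be any point with \<open>Stab x \<subseteq> Stab y\<close>. Hence
  separation is governed by which stabilizers occur, up to conjugacy, and whether a stabilizer
  occurs in two different orbits. Without fixed points, \<open>A\<close> is thus equivalent to the coproduct
  of one coset act per occurring conjugacy class, taken twice for classes occurring in two orbits.
  A fixed point absorbs this multiplicity, since every orbit may be mapped onto it; then one coset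
  act per class plus one or two fixed points suffice. The three types are told apart by the number
  of fixed points (none, one, at least two), which is a geometric invariant: fixed points are the
  solutions of the equations \<open>s x = x\<close>, and the closures of these equations detect how many
  solutions there are.
\<close>

definition conjugate :: "('g, 'm) monoid_scheme \<Rightarrow> 'g \<Rightarrow> 'g set \<Rightarrow> 'g set" where
  "conjugate G g H = {s \<in> carrier G. inv\<^bsub>G\<^esub> g \<otimes>\<^bsub>G\<^esub> s \<otimes>\<^bsub>G\<^esub> g \<in> H}"

definition conjugates :: "('g, 'm) monoid_scheme \<Rightarrow> 'g set \<Rightarrow> 'g set set" where
  "conjugates G H = (\<lambda>g. conjugate G g H) ` carrier G"

context group
begin

lemma mult_inv_cancel_left [simp]: "g \<in> carrier G \<Longrightarrow> s \<in> carrier G \<Longrightarrow> g \<otimes> (inv g \<otimes> s) = s"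
  by (simp add: m_assoc[symmetric])

lemma inv_mult_cancel_left [simp]: "g \<in> carrier G \<Longrightarrow> s \<in> carrier G \<Longrightarrow> inv g \<otimes> (g \<otimes> s) = s"
  by (simp add: m_assoc[symmetric])

lemma conjugate_one: "H \<subseteq> carrier G \<Longrightarrow> conjugate G \<one> H = H"
  unfolding conjugate_def by auto

lemma conjugate_mult:
  assumes "g \<in> carrier G" "h \<in> carrier G"
  shows "conjugate G g (conjugate G h H) = conjugate G (g \<otimes> h) H"
proof -
  have "inv (g \<otimes> h) \<otimes> s \<otimes> (g \<otimes> h) = inv h \<otimes> (inv g \<otimes> s \<otimes> g) \<otimes> h" if "s \<in> carrier G" for s
    using assms that by (simp add: inv_mult_group m_assoc)
  then show ?thesis
    unfolding conjugate_def using assms by auto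
qed

lemma conjugate_inv_cancel:
  "H \<subseteq> carrier G \<Longrightarrow> g \<in> carrier G \<Longrightarrow> conjugate G (inv g) (conjugate G g H) = H"
  by (simp add: conjugate_mult conjugate_one)

lemma conjugate_carrier: "g \<in> carrier G \<Longrightarrow> conjugate G g (carrier G) = carrier G"
  unfolding conjugate_def by auto

lemma conjugate_eq_carrier_iff:
  "H \<subseteq> carrier G \<Longrightarrow> g \<in> carrier G \<Longrightarrow> conjugate G g H = carrier G \<longleftrightarrow> H = carrier G"
  by (metis conjugate_carrier conjugate_inv_cancel inv_closed)

lemma conjugate_normal:
  assumes N: "N \<lhd> G" and g: "g \<in> carrier G"
  shows "conjugate G g N = N"
proof -
  have closed: "x \<otimes> h \<otimes> inv x \<in> N" if "x \<in> carrier G" "h \<in> N" for x h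
    using N normal_inv_iff that by blast
  have N_sub: "N \<subseteq> carrier G"
    using N normal_imp_subgroup subgroup.subset by blast
  have "s \<in> N" if "s \<in> carrier G" "inv g \<otimes> s \<otimes> g \<in> N" for s
    using closed[OF g that(2)] that(1) g by (simp add: m_assoc)
  moreover have "inv g \<otimes> s \<otimes> g \<in> N" if "s \<in> N" for s
    using closed[OF inv_closed[OF g] that] g by simp
  ultimately show ?thesis
    unfolding conjugate_def using N_sub by blast
qed

lemma coset_conjugation_eq_conjugate:
  assumes H: "H \<subseteq> carrier G" and g: "g \<in> carrier G"
  shows "(g <#\<^bsub>G\<^esub> H) #> inv g = conjugate G g H"
proof -
  have "s = g \<otimes> h \<otimes> inv g \<longleftrightarrow> s \<in> carrier G \<and> inv g \<otimes> s \<otimes> g = h" if "h \<in> H" for s h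
    using that H g by (auto simp: m_assoc)
  then show ?thesis
    unfolding conjugate_def l_coset_def r_coset_def by (simp add: set_eq_iff)
qed

lemma conjugate_subgroups_iff:
  "H \<subseteq> carrier G \<Longrightarrow> conjugate_subgroups G H H' \<longleftrightarrow> H' \<in> conjugates G H"
  unfolding conjugate_subgroups_def conjugates_def by (auto simp: coset_conjugation_eq_conjugate)

lemma l_coset_eq_iff:
  assumes H: "subgroup H G" and x: "x \<in> carrier G" and y: "y \<in> carrier G"
  shows "x <#\<^bsub>G\<^esub> H = y <#\<^bsub>G\<^esub> H \<longleftrightarrow> inv y \<otimes> x \<in> H"
proof
  assume "x <#\<^bsub>G\<^esub> H = y <#\<^bsub>G\<^esub> H"
  then have "x \<in> y <#\<^bsub>G\<^esub> H"
    using lcos_self[OF x H] by simp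
  then show "inv y \<otimes> x \<in> H"
    using subgroup.lcos_module_imp[OF H is_group y] by blast
next
  assume "inv y \<otimes> x \<in> H"
  then have "x \<in> y <#\<^bsub>G\<^esub> H"
    using subgroup.lcos_module_rev[OF H is_group y x] by blast
  then show "x <#\<^bsub>G\<^esub> H = y <#\<^bsub>G\<^esub> H"
    using l_repr_independence[OF _ y H] by simp
qed

lemma proper_subgroup_other_coset:
  assumes H: "subgroup H G" and proper: "H \<noteq> carrier G"
  obtains t where "t \<in> carrier G" "\<one> <#\<^bsub>G\<^esub> H \<noteq> t <#\<^bsub>G\<^esub> H"
proof -
  obtain t where t: "t \<in> carrier G" "t \<notin> H"
    using proper subgroup.subset[OF H] by blast
  have "\<one> <#\<^bsub>G\<^esub> H \<noteq> t <#\<^bsub>G\<^esub> H"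
  proof
    assume "\<one> <#\<^bsub>G\<^esub> H = t <#\<^bsub>G\<^esub> H"
    then have "inv t \<in> H"
      using l_coset_eq_iff[OF H one_closed t(1)] t(1) by simp
    then show False
      using subgroup.m_inv_closed[OF H] t by fastforce
  qed
  then show ?thesis
    using that t(1) by blast
qed

end

context group
begin

context
  fixes M and act assumes act: "is_act G M act"
begin

lemma act_closed: "s \<in> carrier G \<Longrightarrow> x \<in> M \<Longrightarrow> act s x \<in> M"
  using act unfolding is_act_def by blast

lemma act_one: "x \<in> M \<Longrightarrow> act \<one> x = x"
  using act unfolding is_act_def by blast

lemma act_mult: "s \<in> carrier G \<Longrightarrow> t \<in> carrier G \<Longrightarrow> x \<in> M \<Longrightarrow> act (s \<otimes> t) x = act s (act t x)"
  using act unfolding is_act_def by blast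

lemma act_nonempty: "M \<noteq> {}"
  using act unfolding is_act_def by blast

lemma act_inv_cancel: "s \<in> carrier G \<Longrightarrow> x \<in> M \<Longrightarrow> act (inv s) (act s x) = x"
  using act_mult[of "inv s" s x] act_one by simp

lemma stabilizer_act:
  assumes g: "g \<in> carrier G" and x: "x \<in> M"
  shows "stabilizer G act (act g x) = conjugate G g (stabilizer G act x)"
proof -
  have "act s (act g x) = act g x \<longleftrightarrow> act (inv g \<otimes> s \<otimes> g) x = x" if s: "s \<in> carrier G" for s
  proof
    assume "act s (act g x) = act g x"
    then show "act (inv g \<otimes> s \<otimes> g) x = x"
      using g s x by (simp add: act_mult act_closed act_inv_cancel)
  next
    assume fix_x: "act (inv g \<otimes> s \<otimes> g) x = x"
    have "act s (act g x) = act g (act (inv g \<otimes> s \<otimes> g) x)"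
      using g s x by (simp add: act_mult[symmetric] m_assoc[symmetric])
    then show "act s (act g x) = act g x"
      using fix_x by simp
  qed
  then show ?thesis
    unfolding stabilizer_def conjugate_def using g by blast
qed

lemma act_stabilizer_subgroup:
  assumes x: "x \<in> M"
  shows "subgroup (stabilizer G act x) G"
proof (rule subgroupI)
  show "stabilizer G act x \<subseteq> carrier G" "stabilizer G act x \<noteq> {}"
    using act_one[OF x] unfolding stabilizer_def by auto
next
  fix s assume "s \<in> stabilizer G act x"
  then show "inv s \<in> stabilizer G act x"
    using act_inv_cancel[of s x] x unfolding stabilizer_def by auto
next
  fix s t assume "s \<in> stabilizer G act x" "t \<in> stabilizer G act x"
  then show "s \<otimes> t \<in> stabilizer G act x"
    using act_mult x unfolding stabilizer_def by auto
qed

lemma act_orbit_refl: "x \<in> M \<Longrightarrow> x \<in> orbit G act x"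
  unfolding orbit_def using act_one by force

lemma act_orbit_subset: "x \<in> M \<Longrightarrow> orbit G act x \<subseteq> M"
  unfolding orbit_def using act_closed by auto

lemma act_orbit_mem: "g \<in> carrier G \<Longrightarrow> act g x \<in> orbit G act x"
  unfolding orbit_def by auto

lemma act_orbit_eq:
  assumes x: "x \<in> M" and y: "y \<in> orbit G act x"
  shows "orbit G act y = orbit G act x"
proof -
  obtain g where g: "g \<in> carrier G" and y_eq: "y = act g x"
    using y unfolding orbit_def by auto
  have "act s y \<in> orbit G act x" if "s \<in> carrier G" for s
    using act_orbit_mem[of "s \<otimes> g" x] that g x y_eq by (simp add: act_mult)
  moreover have "act s x \<in> orbit G act y" if "s \<in> carrier G" for s
  proof -
    have "act s x = act (s \<otimes> inv g) y"
      using that g x y_eq by (simp add: act_mult[symmetric] m_assoc)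
    then show ?thesis
      using act_orbit_mem[of "s \<otimes> inv g" y] that g by simp
  qed
  ultimately show ?thesis
    unfolding orbit_def[of G act x] orbit_def[of G act y] by blast
qed

lemma act_orbit_sym: "x \<in> M \<Longrightarrow> y \<in> orbit G act x \<Longrightarrow> x \<in> orbit G act y"
  using act_orbit_eq act_orbit_refl by blast

end

end

section \<open>Separation by homomorphisms\<close>

definition stabilizers :: "('g, 'm) monoid_scheme \<Rightarrow> 'a set \<Rightarrow> ('g \<Rightarrow> 'a \<Rightarrow> 'a) \<Rightarrow> 'g set set" where
  "stabilizers S M act = stabilizer S act ` M"

definition fixed_points :: "('g, 'm) monoid_scheme \<Rightarrow> 'a set \<Rightarrow> ('g \<Rightarrow> 'a \<Rightarrow> 'a) \<Rightarrow> 'a set" where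
  "fixed_points S M act = {x \<in> M. stabilizer S act x = carrier S}"

definition has_two_fixed_points :: "('g, 'm) monoid_scheme \<Rightarrow> 'a set \<Rightarrow> ('g \<Rightarrow> 'a \<Rightarrow> 'a) \<Rightarrow> bool" where
  "has_two_fixed_points S M act \<longleftrightarrow> (\<exists>z1\<in>fixed_points S M act. \<exists>z2\<in>fixed_points S M act. z1 \<noteq> z2)"

definition hom_separated :: "('g, 'm) monoid_scheme \<Rightarrow> 'a set \<Rightarrow> ('g \<Rightarrow> 'a \<Rightarrow> 'a)
    \<Rightarrow> 'b set \<Rightarrow> ('g \<Rightarrow> 'b \<Rightarrow> 'b) \<Rightarrow> bool" where
  "hom_separated S M act N act' \<longleftrightarrow>
     (\<forall>u\<in>M. \<forall>v\<in>M. u \<noteq> v \<longrightarrow> (\<exists>\<phi>. act_hom S M act N act' \<phi> \<and> \<phi> u \<noteq> \<phi> v))"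

lemma fixed_points_iff: "x \<in> fixed_points S M act \<longleftrightarrow> x \<in> M \<and> (\<forall>s\<in>carrier S. act s x = x)"
  unfolding fixed_points_def stabilizer_def by auto

lemma stabilizers_subsetE:
  assumes "stabilizers S M act \<subseteq> stabilizers S N act'" "x \<in> M"
  obtains y where "y \<in> N" "stabilizer S act' y = stabilizer S act x"
  using assms unfolding stabilizers_def by blast

context group
begin

lemma act_hom_orbit_well_defined:
  assumes M: "is_act G M act" and N: "is_act G N act'"
    and q: "q \<in> M" and y: "y \<in> N" and stab: "stabilizer G act q \<subseteq> stabilizer G act' y"
    and s: "s \<in> carrier G" and s': "s' \<in> carrier G" and eq: "act s q = act s' q"
  shows "act' s y = act' s' y"
proof -
  have "act (inv s' \<otimes> s) q = q"
    using eq s s' q by (simp add: act_mult[OF M] act_inv_cancel[OF M])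
  then have "inv s' \<otimes> s \<in> stabilizer G act q"
    using s s' unfolding stabilizer_def by simp
  then have "act' (inv s' \<otimes> s) y = y"
    using stab unfolding stabilizer_def by blast
  then have "act' s' (act' (inv s' \<otimes> s) y) = act' s' y"
    by simp
  then show ?thesis
    using s s' y by (simp add: act_mult[OF N, symmetric] m_assoc[symmetric])
qed

lemma act_hom_from_orbit_section:
  assumes M: "is_act G M act" and N: "is_act G N act'"
    and r_orbit: "\<And>x. x \<in> M \<Longrightarrow> r x \<in> orbit G act x"
    and r_act: "\<And>g x. g \<in> carrier G \<Longrightarrow> x \<in> M \<Longrightarrow> r (act g x) = r x"
    and target: "\<And>x. x \<in> M \<Longrightarrow> D (r x) \<in> N \<and> stabilizer G act (r x) \<subseteq> stabilizer G act' (D (r x))"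
  shows "\<exists>\<phi>. act_hom G M act N act' \<phi> \<and>
           (\<forall>x\<in>M. \<forall>s\<in>carrier G. x = act s (r x) \<longrightarrow> \<phi> x = act' s (D (r x)))"
proof -
  define \<phi> where "\<phi> x = act' (SOME s. s \<in> carrier G \<and> x = act s (r x)) (D (r x))" for x
  have r_mem: "r x \<in> M" if "x \<in> M" for x
    using r_orbit[OF that] act_orbit_subset[OF M that] by blast
  have reach: "\<exists>s. s \<in> carrier G \<and> x = act s (r x)" if "x \<in> M" for x
    using act_orbit_sym[OF M that r_orbit[OF that]] unfolding orbit_def[of G act "r x"] by blast
  have \<phi>_eq: "\<phi> x = act' s (D (r x))" if x: "x \<in> M" and s: "s \<in> carrier G" "x = act s (r x)" for x s
  proof -
    define s' where "s' = (SOME s. s \<in> carrier G \<and> x = act s (r x))"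
    have s': "s' \<in> carrier G" "x = act s' (r x)"
      using someI_ex[OF reach[OF x]] unfolding s'_def by auto
    then have "act s' (r x) = act s (r x)"
      using s(2) by simp
    then show ?thesis
      unfolding \<phi>_def s'_def[symmetric] using target[OF x] s'(1) s(1)
      by (intro act_hom_orbit_well_defined[OF M N r_mem[OF x]]) auto
  qed
  have "act_hom G M act N act' \<phi>"
    unfolding act_hom_def
  proof (intro conjI ballI)
    fix x assume x: "x \<in> M"
    then obtain s where s: "s \<in> carrier G" "x = act s (r x)"
      using reach by blast
    show "\<phi> x \<in> N"
      using \<phi>_eq[OF x s] act_closed[OF N] s(1) target[OF x] by simp
  next
    fix g x assume g: "g \<in> carrier G" and x: "x \<in> M"
    then obtain s where s: "s \<in> carrier G" "x = act s (r x)"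
      using reach by blast
    have "act (g \<otimes> s) (r (act g x)) = act g x"
      using r_act[OF g x] act_mult[OF M g s(1) r_mem[OF x]] s(2) by simp
    then have "\<phi> (act g x) = act' (g \<otimes> s) (D (r x))"
      using \<phi>_eq[OF act_closed[OF M g x] m_closed[OF g s(1)]] r_act[OF g x] by simp
    then show "\<phi> (act g x) = act' g (\<phi> x)"
      using \<phi>_eq[OF x s] act_mult[OF N g s(1)] target[OF x] by simp
  qed
  then show ?thesis
    using \<phi>_eq by blast
qed

lemma act_hom_from_orbit_reps:
  assumes M: "is_act G M act" and N: "is_act G N act'"
    and R: "\<And>x. x \<in> M \<Longrightarrow> R (orbit G act x) \<in> orbit G act x"
    and D: "\<And>x. x \<in> M \<Longrightarrow> D (R (orbit G act x)) \<in> N \<and>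
              stabilizer G act (R (orbit G act x)) \<subseteq> stabilizer G act' (D (R (orbit G act x)))"
  shows "\<exists>\<phi>. act_hom G M act N act' \<phi> \<and> (\<forall>x\<in>M. \<phi> (R (orbit G act x)) = D (R (orbit G act x)))"
proof -
  have r_act: "R (orbit G act (act g x)) = R (orbit G act x)" if "g \<in> carrier G" "x \<in> M" for g x
    using act_orbit_eq[OF M that(2) act_orbit_mem[OF M that(1)]] by simp
  obtain \<phi> where hom: "act_hom G M act N act' \<phi>"
    and eval: "\<forall>x\<in>M. \<forall>s\<in>carrier G. x = act s (R (orbit G act x)) \<longrightarrow> \<phi> x = act' s (D (R (orbit G act x)))"
    using act_hom_from_orbit_section[OF M N R r_act D] by blast
  have "\<phi> (R (orbit G act x)) = D (R (orbit G act x))" if x: "x \<in> M" for x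
  proof -
    define q where "q = R (orbit G act x)"
    have q: "q \<in> M"
      using R[OF x] act_orbit_subset[OF M x] unfolding q_def by blast
    have "orbit G act q = orbit G act x"
      using act_orbit_eq[OF M x R[OF x]] unfolding q_def .
    then have "q = act \<one> (R (orbit G act q))"
      using act_one[OF M q] unfolding q_def by simp
    then have "\<phi> q = act' \<one> (D (R (orbit G act q)))"
      using bspec[OF bspec[OF eval q] one_closed] by blast
    then show ?thesis
      using \<open>orbit G act q = orbit G act x\<close> act_one[OF N] D[OF x] unfolding q_def by simp
  qed
  then show ?thesis
    using hom by blast
qed

lemma act_hom_two_points:
  assumes M: "is_act G M act" and N: "is_act G N act'"
    and realized: "stabilizers G M act \<subseteq> stabilizers G N act'"
    and u: "u \<in> M" and v: "v \<in> M" and y1: "y1 \<in> N" and y2: "y2 \<in> N"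
    and stab_u: "stabilizer G act u \<subseteq> stabilizer G act' y1"
    and stab_v: "stabilizer G act v \<subseteq> stabilizer G act' y2"
    and apart: "v \<notin> orbit G act u \<or> (v = u \<and> y2 = y1)"
  shows "\<exists>\<phi>. act_hom G M act N act' \<phi> \<and> \<phi> u = y1 \<and> \<phi> v = y2"
proof -
  define R where "R Orb = (if u \<in> Orb then u else if v \<in> Orb then v else (SOME x. x \<in> Orb))" for Orb
  have "\<forall>q\<in>M. \<exists>y\<in>N. stabilizer G act' y = stabilizer G act q"
    using stabilizers_subsetE[OF realized] by metis
  then obtain f where f: "\<And>q. q \<in> M \<Longrightarrow> f q \<in> N \<and> stabilizer G act' (f q) = stabilizer G act q"
    by metis
  define D where "D q = (if q = u then y1 else if q = v then y2 else f q)" for q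
  have R_mem: "R (orbit G act x) \<in> orbit G act x" if "x \<in> M" for x
    unfolding R_def using someI[where P = "\<lambda>y. y \<in> orbit G act x", OF act_orbit_refl[OF M that]]
    by auto
  have D_target: "D q \<in> N \<and> stabilizer G act q \<subseteq> stabilizer G act' (D q)" if "q \<in> M" for q
    unfolding D_def using y1 y2 stab_u stab_v f[OF that] by auto
  have D_R: "D (R (orbit G act x)) \<in> N \<and>
             stabilizer G act (R (orbit G act x)) \<subseteq> stabilizer G act' (D (R (orbit G act x)))"
    if "x \<in> M" for x
    using D_target[OF subsetD[OF act_orbit_subset[OF M that] R_mem[OF that]]] .
  obtain \<phi> where hom: "act_hom G M act N act' \<phi>"
    and reps: "\<forall>x\<in>M. \<phi> (R (orbit G act x)) = D (R (orbit G act x))"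
    using act_hom_from_orbit_reps[OF M N R_mem D_R] by blast
  have "R (orbit G act u) = u"
    unfolding R_def using act_orbit_refl[OF M u] by simp
  then have "\<phi> u = y1"
    using bspec[OF reps u] unfolding D_def by simp
  moreover have "\<phi> v = y2"
  proof (cases "v \<in> orbit G act u")
    case True
    then show ?thesis using apart \<open>\<phi> u = y1\<close> by simp
  next
    case False
    then have "u \<notin> orbit G act v" "v \<noteq> u"
      using act_orbit_sym[OF M v] act_orbit_refl[OF M u] by blast+
    then have "R (orbit G act v) = v"
      unfolding R_def using act_orbit_refl[OF M v] by simp
    then show ?thesis
      using bspec[OF reps v] \<open>v \<noteq> u\<close> unfolding D_def by simp
  qed
  ultimately show ?thesis
    using hom by blast
qed

lemma act_hom_separates_orbit:
  assumes M: "is_act G M act" and N: "is_act G N act'"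
    and realized: "stabilizers G M act \<subseteq> stabilizers G N act'"
    and u: "u \<in> M" and g: "g \<in> carrier G" and moves: "act g u \<noteq> u"
  shows "\<exists>\<phi>. act_hom G M act N act' \<phi> \<and> \<phi> u \<noteq> \<phi> (act g u)"
proof -
  obtain y where y: "y \<in> N" "stabilizer G act' y = stabilizer G act u"
    using stabilizers_subsetE[OF realized u] .
  then obtain \<phi> where hom: "act_hom G M act N act' \<phi>" and "\<phi> u = y"
    using act_hom_two_points[OF M N realized u u y(1) y(1)] by auto
  then have "\<phi> (act g u) = act' g y"
    using g u unfolding act_hom_def by simp
  moreover have "act' g y \<noteq> y"
  proof
    assume "act' g y = y"
    then have "g \<in> stabilizer G act u"
      using y(2) g unfolding stabilizer_def[of G act'] by blast
    then show False
      using moves unfolding stabilizer_def by simp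
  qed
  ultimately show ?thesis
    using hom \<open>\<phi> u = y\<close> by auto
qed

text \<open>Distinct orbits with distinct stabilizers are separated by sending them to points realizing
  these stabilizers, so only orbits sharing a stabilizer need a second target.\<close>

lemma hom_separatedI:
  assumes M: "is_act G M act" and N: "is_act G N act'"
    and realized: "stabilizers G M act \<subseteq> stabilizers G N act'"
    and twins: "\<And>u v. u \<in> M \<Longrightarrow> v \<in> M \<Longrightarrow> v \<notin> orbit G act u \<Longrightarrow>
                  stabilizer G act v = stabilizer G act u \<Longrightarrow>
                  \<exists>y1\<in>N. \<exists>y2\<in>N. y1 \<noteq> y2 \<and> stabilizer G act u \<subseteq> stabilizer G act' y1 \<and>
                                    stabilizer G act u \<subseteq> stabilizer G act' y2"
  shows "hom_separated G M act N act'"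
  unfolding hom_separated_def
proof (intro ballI impI)
  fix u v assume u: "u \<in> M" and v: "v \<in> M" and "u \<noteq> v"
  show "\<exists>\<phi>. act_hom G M act N act' \<phi> \<and> \<phi> u \<noteq> \<phi> v"
  proof (cases "v \<in> orbit G act u")
    case True
    then obtain g where "g \<in> carrier G" "v = act g u"
      unfolding orbit_def by auto
    then show ?thesis
      using act_hom_separates_orbit[OF M N realized u] \<open>u \<noteq> v\<close> by auto
  next
    case False
    obtain y1 where y1: "y1 \<in> N" "stabilizer G act' y1 = stabilizer G act u"
      using stabilizers_subsetE[OF realized u] .
    have "\<exists>y1'\<in>N. \<exists>y2'\<in>N. y1' \<noteq> y2' \<and> stabilizer G act u \<subseteq> stabilizer G act' y1' \<and>
                             stabilizer G act v \<subseteq> stabilizer G act' y2'"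
    proof (cases "stabilizer G act v = stabilizer G act u")
      case True
      then show ?thesis
        using twins[OF u v False True] by simp
    next
      case stab_ne: False
      obtain y2 where y2: "y2 \<in> N" "stabilizer G act' y2 = stabilizer G act v"
        using stabilizers_subsetE[OF realized v] .
      have "y1 \<noteq> y2"
        using y1(2) y2(2) stab_ne by auto
      then show ?thesis
        using y1 y2 by (intro bexI[of _ y1] bexI[of _ y2]) auto
    qed
    then obtain y1' y2' where y': "y1' \<in> N" "y2' \<in> N" "y1' \<noteq> y2'"
      "stabilizer G act u \<subseteq> stabilizer G act' y1'" "stabilizer G act v \<subseteq> stabilizer G act' y2'"
      by blast
    then obtain \<phi> where "act_hom G M act N act' \<phi>" "\<phi> u = y1'" "\<phi> v = y2'"
      using act_hom_two_points[OF M N realized u v y'(1,2,4,5)] False by blast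
    then show ?thesis
      using y'(3) by blast
  qed
qed

text \<open>A fixed point of the target can serve as the second target of every orbit that is not
  itself fixed.\<close>

lemma hom_separated_into_fixed_point:
  assumes M: "is_act G M act" and N: "is_act G N act'"
    and realized: "stabilizers G M act \<subseteq> stabilizers G N act'"
    and fixed: "fixed_points G N act' \<noteq> {}"
    and two_fixed: "has_two_fixed_points G M act \<Longrightarrow> has_two_fixed_points G N act'"
  shows "hom_separated G M act N act'"
proof (rule hom_separatedI[OF M N realized])
  fix u v assume u: "u \<in> M" and v: "v \<in> M" and apart: "v \<notin> orbit G act u"
    and same_stab: "stabilizer G act v = stabilizer G act u"
  show "\<exists>y1\<in>N. \<exists>y2\<in>N. y1 \<noteq> y2 \<and> stabilizer G act u \<subseteq> stabilizer G act' y1 \<and>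
                          stabilizer G act u \<subseteq> stabilizer G act' y2"
  proof (cases "stabilizer G act u = carrier G")
    case True
    moreover have "u \<noteq> v"
      using apart act_orbit_refl[OF M u] by blast
    ultimately have "has_two_fixed_points G M act"
      using u v same_stab unfolding has_two_fixed_points_def fixed_points_def by blast
    then obtain w1 w2 where "w1 \<in> N" "w2 \<in> N" "w1 \<noteq> w2"
      "stabilizer G act' w1 = carrier G" "stabilizer G act' w2 = carrier G"
      using two_fixed unfolding has_two_fixed_points_def fixed_points_def by blast
    moreover have "stabilizer G act u \<subseteq> carrier G"
      unfolding stabilizer_def by blast
    ultimately show ?thesis
      by (intro bexI[of _ w1] bexI[of _ w2]) auto
  next
    case False
    obtain y0 where y0: "y0 \<in> N" "stabilizer G act' y0 = carrier G"
      using fixed unfolding fixed_points_def by blast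
    obtain y where "y \<in> N" "stabilizer G act' y = stabilizer G act u"
      using stabilizers_subsetE[OF realized u] .
    moreover have "stabilizer G act u \<subseteq> carrier G"
      unfolding stabilizer_def by blast
    ultimately show ?thesis
      using y0 False by (intro bexI[of _ y0] bexI[of _ y]) auto
  qed
qed

end

section \<open>Geometric equivalence and fixed points\<close>

lemma closure_rel_subset_if_hom_separated:
  assumes sep: "hom_separated S M act N act'"
  shows "closure_rel S V N act' T \<subseteq> closure_rel S V M act T"
proof
  fix pq assume pq: "pq \<in> closure_rel S V N act' T"
  obtain p q where pq_eq: "pq = (p, q)"
    by (cases pq)
  have p: "p \<in> free_act_carrier S V" and q: "q \<in> free_act_carrier S V"
    and N_eq: "\<And>\<mu>. act_hom S (free_act_carrier S V) (free_act S) N act' \<mu> \<Longrightarrow>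
                   \<forall>(a, b)\<in>T. \<mu> a = \<mu> b \<Longrightarrow> \<mu> p = \<mu> q"
    using pq unfolding pq_eq closure_rel_def by auto
  have "\<mu> p = \<mu> q" if \<mu>: "act_hom S (free_act_carrier S V) (free_act S) M act \<mu>"
    and kills: "\<forall>(a, b)\<in>T. \<mu> a = \<mu> b" for \<mu>
  proof (rule ccontr)
    assume "\<mu> p \<noteq> \<mu> q"
    moreover have "\<mu> p \<in> M" "\<mu> q \<in> M"
      using \<mu> p q unfolding act_hom_def by auto
    ultimately obtain \<phi> where \<phi>: "act_hom S M act N act' \<phi>" and ne: "\<phi> (\<mu> p) \<noteq> \<phi> (\<mu> q)"
      using sep unfolding hom_separated_def by blast
    have "act_hom S (free_act_carrier S V) (free_act S) N act' (\<phi> \<circ> \<mu>)"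
      using \<mu> \<phi> unfolding act_hom_def by auto
    moreover have "\<forall>(a, b)\<in>T. (\<phi> \<circ> \<mu>) a = (\<phi> \<circ> \<mu>) b"
      using kills by auto
    ultimately have "(\<phi> \<circ> \<mu>) p = (\<phi> \<circ> \<mu>) q"
      by (rule N_eq)
    then show False
      using ne by simp
  qed
  then show "pq \<in> closure_rel S V M act T"
    unfolding pq_eq closure_rel_def using p q by auto
qed

lemma geom_equivI:
  assumes "is_act S M act" "is_act S N act'"
    and "hom_separated S M act N act'" "hom_separated S N act' M act"
  shows "geom_equiv S M act N act'"
  unfolding geom_equiv_def
  using assms closure_rel_subset_if_hom_separated by (metis subset_antisym)

lemma geom_equiv_sym: "geom_equiv S M act N act' \<Longrightarrow> geom_equiv S N act' M act"
  unfolding geom_equiv_def by metis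

lemma geom_equivD:
  fixes V :: "nat set"
  assumes "geom_equiv S M act N act'" "finite V" "V \<noteq> {}"
    and "T \<subseteq> free_act_carrier S V \<times> free_act_carrier S V"
  shows "closure_rel S V M act T = closure_rel S V N act' T"
  using assms unfolding geom_equiv_def by blast

definition free_eval :: "('g \<Rightarrow> 'b \<Rightarrow> 'b) \<Rightarrow> ('x \<Rightarrow> 'b) \<Rightarrow> 'x \<times> 'g \<Rightarrow> 'b" where
  "free_eval act a p = act (snd p) (a (fst p))"

definition fixing_relation :: "('g, 'm) monoid_scheme \<Rightarrow> 'x set \<Rightarrow> (('x \<times> 'g) \<times> ('x \<times> 'g)) set" where
  "fixing_relation S I = {((i, s), (i, \<one>\<^bsub>S\<^esub>)) | i s. i \<in> I \<and> s \<in> carrier S}"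

context group
begin

lemma act_hom_free_eval:
  assumes N: "is_act G N act" and a: "\<And>i. i \<in> V \<Longrightarrow> a i \<in> N"
  shows "act_hom G (free_act_carrier G V) (free_act G) N act (free_eval act a)"
  unfolding act_hom_def free_act_carrier_def free_act_def free_eval_def
  using act_closed[OF N] act_mult[OF N] a by auto

lemma act_hom_free_eq_free_eval:
  assumes \<mu>: "act_hom G (free_act_carrier G V) (free_act G) N act \<mu>" and p: "p \<in> free_act_carrier G V"
  shows "\<mu> p = free_eval act (\<lambda>i. \<mu> (i, \<one>)) p"
proof -
  obtain i s where p_eq: "p = (i, s)" and i: "i \<in> V" and s: "s \<in> carrier G"
    using p unfolding free_act_carrier_def by blast
  have "(i, \<one>) \<in> free_act_carrier G V"
    using i unfolding free_act_carrier_def by simp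
  then have "\<mu> (free_act G s (i, \<one>)) = act s (\<mu> (i, \<one>))"
    using \<mu> s unfolding act_hom_def by blast
  then show ?thesis
    unfolding p_eq free_act_def free_eval_def using s by simp
qed

lemma closure_rel_iff_free_eval:
  assumes N: "is_act G N act" and T: "T \<subseteq> free_act_carrier G V \<times> free_act_carrier G V"
  shows "(p, q) \<in> closure_rel G V N act T \<longleftrightarrow>
    p \<in> free_act_carrier G V \<and> q \<in> free_act_carrier G V \<and>
    (\<forall>a. (\<forall>i\<in>V. a i \<in> N) \<and> (\<forall>(p', q')\<in>T. free_eval act a p' = free_eval act a q') \<longrightarrow>
         free_eval act a p = free_eval act a q)"
    (is "_ \<longleftrightarrow> ?p \<and> ?q \<and> ?by_assignments")
proof -
  let ?by_homs = "\<forall>\<mu>. act_hom G (free_act_carrier G V) (free_act G) N act \<mu> \<and>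
                     (\<forall>(p', q')\<in>T. \<mu> p' = \<mu> q') \<longrightarrow> \<mu> p = \<mu> q"
  have "?by_homs \<longleftrightarrow> ?by_assignments" if p: ?p and q: ?q
  proof
    assume homs: ?by_homs
    show ?by_assignments
    proof (intro allI impI, elim conjE)
      fix a assume a: "\<forall>i\<in>V. a i \<in> N" and kills: "\<forall>(p', q')\<in>T. free_eval act a p' = free_eval act a q'"
      have "act_hom G (free_act_carrier G V) (free_act G) N act (free_eval act a)"
        using a by (intro act_hom_free_eval[OF N]) simp
      then show "free_eval act a p = free_eval act a q"
        using homs kills by simp
    qed
  next
    assume assignments: ?by_assignments
    show ?by_homs
    proof (intro allI impI, elim conjE)
      fix \<mu> assume \<mu>: "act_hom G (free_act_carrier G V) (free_act G) N act \<mu>"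
        and kills: "\<forall>(p', q')\<in>T. \<mu> p' = \<mu> q'"
      define a where "a i = \<mu> (i, \<one>)" for i
      have eval: "\<mu> r = free_eval act a r" if "r \<in> free_act_carrier G V" for r
        unfolding a_def using act_hom_free_eq_free_eval[OF \<mu> that] .
      have "\<forall>i\<in>V. a i \<in> N"
        using \<mu> unfolding a_def act_hom_def free_act_carrier_def by auto
      moreover have "free_eval act a p' = free_eval act a q'" if pq': "(p', q') \<in> T" for p' q'
      proof -
        have "\<mu> p' = \<mu> q'"
          using kills pq' by auto
        moreover have "p' \<in> free_act_carrier G V" "q' \<in> free_act_carrier G V"
          using pq' T by auto
        ultimately show ?thesis
          using eval by simp
      qed
      ultimately have "free_eval act a p = free_eval act a q"
        using assignments by auto
      then show "\<mu> p = \<mu> q"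
        using eval p q by simp
    qed
  qed
  then show ?thesis
    unfolding closure_rel_def by auto
qed

lemma free_eval_fixing_relation_iff:
  assumes N: "is_act G N act" and a: "\<forall>i\<in>I. a i \<in> N"
  shows "(\<forall>(p, q)\<in>fixing_relation G I. free_eval act a p = free_eval act a q) \<longleftrightarrow>
         (\<forall>i\<in>I. a i \<in> fixed_points G N act)"
  using a act_one[OF N] unfolding fixing_relation_def free_eval_def fixed_points_iff by auto

lemma fixing_relation_subset: "I \<subseteq> V \<Longrightarrow> fixing_relation G I \<subseteq> free_act_carrier G V \<times> free_act_carrier G V"
  unfolding fixing_relation_def free_act_carrier_def by auto

lemma geom_equiv_moving_point:
  assumes ge: "geom_equiv G M act N act'" and x: "x \<in> N" and g: "g \<in> carrier G"
    and moves: "act' g x \<noteq> x"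
  shows "\<exists>b\<in>M. act g b \<noteq> b"
proof -
  have M: "is_act G M act" and N: "is_act G N act'"
    using ge unfolding geom_equiv_def by auto
  have pq: "(0::nat, \<one>) \<in> free_act_carrier G {0}" "(0::nat, g) \<in> free_act_carrier G {0}"
    unfolding free_act_carrier_def using g by auto
  have "((0::nat, \<one>), (0, g)) \<notin> closure_rel G {0} N act' {}"
    unfolding closure_rel_iff_free_eval[OF N empty_subsetI]
    using x moves act_one[OF N x] by (auto simp: free_eval_def intro!: exI[of _ "\<lambda>_. x"])
  then have "((0::nat, \<one>), (0, g)) \<notin> closure_rel G {0} M act {}"
    using geom_equivD[OF ge, of "{0::nat}" "{}"] by simp
  then obtain a where "a 0 \<in> M" "act g (a 0) \<noteq> a 0"
    unfolding closure_rel_iff_free_eval[OF M empty_subsetI]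
    using pq act_one[OF M] by (auto simp: free_eval_def)
  then show ?thesis
    by blast
qed


lemma geom_equiv_fixed_points_nonempty:
  assumes ge: "geom_equiv G M act N act'" and fixed: "fixed_points G M act \<noteq> {}"
  shows "fixed_points G N act' \<noteq> {}"
proof
  assume no_fixed: "fixed_points G N act' = {}"
  have M: "is_act G M act" and N: "is_act G N act'"
    using ge unfolding geom_equiv_def by auto
  obtain w where "w \<in> N"
    using act_nonempty[OF N] by blast
  moreover have "w \<notin> fixed_points G N act'"
    using no_fixed by simp
  ultimately obtain g where g: "g \<in> carrier G" and "act' g w \<noteq> w"
    unfolding fixed_points_iff by auto
  then obtain b where b: "b \<in> M" and moves: "act g b \<noteq> b"
    using geom_equiv_moving_point[OF ge \<open>w \<in> N\<close>] by blast
  obtain z where z: "z \<in> fixed_points G M act"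
    using fixed by blast
  let ?T = "fixing_relation G {0::nat}"
  have T: "?T \<subseteq> free_act_carrier G {0, 1} \<times> free_act_carrier G {0, 1}"
    by (rule fixing_relation_subset) simp
  have pq: "(1::nat, \<one>) \<in> free_act_carrier G {0, 1}" "(1::nat, g) \<in> free_act_carrier G {0, 1}"
    unfolding free_act_carrier_def using g by auto
  text \<open>No assignment into N respects ?T, since it would have to send 0 to a fixed point.\<close>
  have "\<not> (\<forall>(p, q)\<in>?T. free_eval act' a p = free_eval act' a q)" if "\<forall>i\<in>{0::nat, 1}. a i \<in> N" for a
    using free_eval_fixing_relation_iff[OF N, of "{0}" a] that no_fixed by auto
  then have "((1::nat, \<one>), (1, g)) \<in> closure_rel G {0, 1} N act' ?T"
    unfolding closure_rel_iff_free_eval[OF N T] using pq by auto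
  moreover have "((1::nat, \<one>), (1, g)) \<notin> closure_rel G {0, 1} M act ?T"
  proof -
    define a where "a i = (if i = 0 then z else b)" for i :: nat
    have a_M: "\<forall>i\<in>{0, 1}. a i \<in> M"
      using z b unfolding a_def fixed_points_def by auto
    have "\<forall>(p, q)\<in>?T. free_eval act a p = free_eval act a q"
      using free_eval_fixing_relation_iff[OF M, of "{0}" a] a_M z unfolding a_def by auto
    moreover have "free_eval act a (1, \<one>) \<noteq> free_eval act a (1, g)"
      using moves act_one[OF M b] unfolding a_def free_eval_def by simp
    ultimately show ?thesis
      unfolding closure_rel_iff_free_eval[OF M T] using a_M by blast
  qed
  ultimately show False
    using geom_equivD[OF ge _ _ T] by simp
qed

lemma geom_equiv_has_two_fixed_points:
  assumes ge: "geom_equiv G M act N act'" and two: "has_two_fixed_points G M act"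
  shows "has_two_fixed_points G N act'"
proof (rule ccontr)
  assume not_two: "\<not> has_two_fixed_points G N act'"
  have M: "is_act G M act" and N: "is_act G N act'"
    using ge unfolding geom_equiv_def by auto
  obtain z1 z2 where z: "z1 \<in> fixed_points G M act" "z2 \<in> fixed_points G M act" "z1 \<noteq> z2"
    using two unfolding has_two_fixed_points_def by blast
  let ?T = "fixing_relation G {0::nat, 1}"
  have T: "?T \<subseteq> free_act_carrier G {0, 1} \<times> free_act_carrier G {0, 1}"
    by (rule fixing_relation_subset) simp
  have pq: "(0::nat, \<one>) \<in> free_act_carrier G {0, 1}" "(1::nat, \<one>) \<in> free_act_carrier G {0, 1}"
    unfolding free_act_carrier_def by auto
  have "((0::nat, \<one>), (1::nat, \<one>)) \<in> closure_rel G {0, 1} N act' ?T"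
  proof -
    have "free_eval act' a (0, \<one>) = free_eval act' a (1, \<one>)"
      if a_N: "\<forall>i\<in>{0::nat, 1}. a i \<in> N"
        and respects: "\<forall>(p, q)\<in>?T. free_eval act' a p = free_eval act' a q" for a
    proof -
      have "a 0 \<in> fixed_points G N act'" "a 1 \<in> fixed_points G N act'"
        using free_eval_fixing_relation_iff[OF N a_N] respects by auto
      then have "a 0 = a 1"
        using not_two unfolding has_two_fixed_points_def by blast
      then show ?thesis
        using a_N act_one[OF N] unfolding free_eval_def by simp
    qed
    then show ?thesis
      unfolding closure_rel_iff_free_eval[OF N T] using pq by blast
  qed
  moreover have "((0::nat, \<one>), (1::nat, \<one>)) \<notin> closure_rel G {0, 1} M act ?T"
  proof -
    define a where "a i = (if i = 0 then z1 else z2)" for i :: nat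
    have a_M: "\<forall>i\<in>{0, 1}. a i \<in> M"
      using z unfolding a_def fixed_points_def by auto
    have "\<forall>(p, q)\<in>?T. free_eval act a p = free_eval act a q"
      using free_eval_fixing_relation_iff[OF M a_M] z unfolding a_def by auto
    moreover have "free_eval act a (0, \<one>) \<noteq> free_eval act a (1, \<one>)"
      using z act_one[OF M] unfolding a_def free_eval_def fixed_points_def by simp
    ultimately show ?thesis
      unfolding closure_rel_iff_free_eval[OF M T] using a_M by blast
  qed
  ultimately show False
    using geom_equivD[OF ge _ _ T] by simp
qed

end

definition coset_summand :: "'g set set \<Rightarrow> 'g set set \<Rightarrow> 'g set set \<Rightarrow> nat \<Rightarrow> 'g set \<Rightarrow> bool" where
  "coset_summand K2 K1 L i H \<longleftrightarrow> (i \<in> {0, 1} \<and> H \<in> K2) \<or> (i = 2 \<and> H \<in> K1) \<or> (i = 3 \<and> H \<in> L)"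

lemma coset_summandD: "coset_summand K2 K1 L i H \<Longrightarrow> i \<le> 3 \<and> H \<in> K2 \<union> K1 \<union> L"
  unfolding coset_summand_def by auto

lemma coset_summand_two_tags:
  "coset_summand K2 K1 L i H \<Longrightarrow> coset_summand K2 K1 L i' H \<Longrightarrow> i \<noteq> i' \<Longrightarrow> K1 \<inter> L = {} \<Longrightarrow> H \<in> K2"
  unfolding coset_summand_def by auto

context group
begin

lemma rep_carrier_cases:
  assumes "x \<in> rep_carrier G K2 K1 L n"
  obtains (coset) i H t where "x = (i, H, t <#\<^bsub>G\<^esub> H)" "t \<in> carrier G" "coset_summand K2 K1 L i H"
    | (point) i where "x = (i, {}, {})" "4 \<le> i" "i < 4 + n"
  using assms unfolding rep_carrier_def left_cosets_of_def coset_summand_def by blast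

lemma rep_carrier_cosetI:
  "coset_summand K2 K1 L i H \<Longrightarrow> t \<in> carrier G \<Longrightarrow> (i, H, t <#\<^bsub>G\<^esub> H) \<in> rep_carrier G K2 K1 L n"
  unfolding rep_carrier_def left_cosets_of_def coset_summand_def by blast

lemma rep_carrier_pointI: "4 \<le> i \<Longrightarrow> i < 4 + n \<Longrightarrow> (i, {}, {}) \<in> rep_carrier G K2 K1 L n"
  unfolding rep_carrier_def by blast

lemma rep_act_coset:
  "i \<le> 3 \<Longrightarrow> H \<subseteq> carrier G \<Longrightarrow> s \<in> carrier G \<Longrightarrow> t \<in> carrier G \<Longrightarrow>
    rep_act G s (i, H, t <#\<^bsub>G\<^esub> H) = (i, H, (s \<otimes> t) <#\<^bsub>G\<^esub> H)"
  unfolding rep_act_def by (simp add: lcos_m_assoc)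

lemma rep_act_point: "4 \<le> i \<Longrightarrow> rep_act G s (i, H, C) = (i, H, C)"
  unfolding rep_act_def by simp

lemma rep_stabilizer_coset:
  assumes H: "subgroup H G" and t: "t \<in> carrier G" and i: "i \<le> 3"
  shows "stabilizer G (rep_act G) (i, H, t <#\<^bsub>G\<^esub> H) = conjugate G t H"
proof -
  have "rep_act G s (i, H, t <#\<^bsub>G\<^esub> H) = (i, H, t <#\<^bsub>G\<^esub> H) \<longleftrightarrow> inv t \<otimes> s \<otimes> t \<in> H"
    if s: "s \<in> carrier G" for s
    using rep_act_coset[OF i subgroup.subset[OF H] s t] l_coset_eq_iff[OF H m_closed[OF s t] t] s t
    by (simp add: m_assoc)
  then show ?thesis
    unfolding stabilizer_def conjugate_def by blast
qed

lemma rep_stabilizer_point: "4 \<le> i \<Longrightarrow> stabilizer G (rep_act G) (i, H, C) = carrier G"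
  unfolding stabilizer_def by (simp add: rep_act_point)

lemma rep_orbit_coset:
  assumes i: "i \<le> 3" and H: "H \<subseteq> carrier G" and t: "t \<in> carrier G" and t': "t' \<in> carrier G"
  shows "(i, H, t' <#\<^bsub>G\<^esub> H) \<in> orbit G (rep_act G) (i, H, t <#\<^bsub>G\<^esub> H)"
proof -
  have "rep_act G (t' \<otimes> inv t) (i, H, t <#\<^bsub>G\<^esub> H) = (i, H, t' <#\<^bsub>G\<^esub> H)"
    using rep_act_coset[OF i H _ t] t t' by (simp add: m_assoc)
  then show ?thesis
    unfolding orbit_def using m_closed[OF t' inv_closed[OF t]] by (blast intro: sym)
qed

context
  fixes K2 K1 L :: "'a set set"
  assumes subgroups: "\<forall>H\<in>K2 \<union> K1 \<union> L. subgroup H G"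
begin

lemma coset_summand_subset: "coset_summand K2 K1 L i H \<Longrightarrow> H \<subseteq> carrier G"
  using coset_summandD subgroups subgroup.subset by blast

lemma rep_is_act:
  assumes nonempty: "rep_carrier G K2 K1 L n \<noteq> {}"
  shows "is_act G (rep_carrier G K2 K1 L n) (rep_act G)"
  unfolding is_act_def
proof (intro conjI ballI nonempty)
  fix s x assume s: "s \<in> carrier G" and x: "x \<in> rep_carrier G K2 K1 L n"
  from x show "rep_act G s x \<in> rep_carrier G K2 K1 L n"
  proof (cases rule: rep_carrier_cases)
    case (coset i H t)
    then have "rep_act G s x = (i, H, (s \<otimes> t) <#\<^bsub>G\<^esub> H)"
      using rep_act_coset[OF conjunct1[OF coset_summandD[OF coset(3)]] coset_summand_subset[OF coset(3)]
          s coset(2)] by simp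
    then show ?thesis
      using rep_carrier_cosetI[OF coset(3)] s coset(2) by simp
  qed (simp add: rep_act_point rep_carrier_pointI)
next
  fix x assume "x \<in> rep_carrier G K2 K1 L n"
  then show "rep_act G \<one> x = x"
  proof (cases rule: rep_carrier_cases)
    case (coset i H t)
    then show ?thesis
      using rep_act_coset[OF _ coset_summand_subset[OF coset(3)] one_closed coset(2)]
        coset_summandD[OF coset(3)] by simp
  qed (simp add: rep_act_point)
next
  fix s u x assume s: "s \<in> carrier G" and u: "u \<in> carrier G" and x: "x \<in> rep_carrier G K2 K1 L n"
  from x show "rep_act G (s \<otimes> u) x = rep_act G s (rep_act G u x)"
  proof (cases rule: rep_carrier_cases)
    case (coset i H t)
    note act = rep_act_coset[OF conjunct1[OF coset_summandD[OF coset(3)]] coset_summand_subset[OF coset(3)]]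
    show ?thesis
      using act[OF m_closed[OF s u] coset(2)] act[OF u coset(2)] act[OF s m_closed[OF u coset(2)]]
        coset(1,2) s u by (simp add: m_assoc)
  qed (simp add: rep_act_point)
qed

lemma rep_stabilizers:
  "stabilizers G (rep_carrier G K2 K1 L n) (rep_act G) =
     (\<Union>H\<in>K2 \<union> K1 \<union> L. conjugates G H) \<union> (if n = 0 then {} else {carrier G})"
proof (intro equalityI subsetI)
  fix S assume "S \<in> stabilizers G (rep_carrier G K2 K1 L n) (rep_act G)"
  then obtain x where x: "x \<in> rep_carrier G K2 K1 L n" and S: "S = stabilizer G (rep_act G) x"
    unfolding stabilizers_def by blast
  from x show "S \<in> (\<Union>H\<in>K2 \<union> K1 \<union> L. conjugates G H) \<union> (if n = 0 then {} else {carrier G})"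
  proof (cases rule: rep_carrier_cases)
    case (coset i H t)
    then show ?thesis
      using S rep_stabilizer_coset[of H t i] coset_summandD[of K2 K1 L i H] subgroups
      unfolding conjugates_def by auto
  next
    case (point i)
    then show ?thesis
      using S rep_stabilizer_point by simp
  qed
next
  fix S assume "S \<in> (\<Union>H\<in>K2 \<union> K1 \<union> L. conjugates G H) \<union> (if n = 0 then {} else {carrier G})"
  then consider H t where "H \<in> K2 \<union> K1 \<union> L" "t \<in> carrier G" "S = conjugate G t H"
    | "n \<noteq> 0" "S = carrier G"
    unfolding conjugates_def by (auto split: if_splits)
  then show "S \<in> stabilizers G (rep_carrier G K2 K1 L n) (rep_act G)"
  proof cases
    case 1
    then obtain i where "coset_summand K2 K1 L i H"
      unfolding coset_summand_def by auto
    then show ?thesis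
      unfolding stabilizers_def
      using 1 rep_carrier_cosetI rep_stabilizer_coset subgroups coset_summandD by (metis image_eqI)
  next
    case 2
    then show ?thesis
      unfolding stabilizers_def
      using rep_carrier_pointI[of 4 n] rep_stabilizer_point[of 4] by force
  qed
qed

lemma rep_fixed_points:
  assumes proper: "carrier G \<notin> K2 \<union> K1 \<union> L"
  shows "fixed_points G (rep_carrier G K2 K1 L n) (rep_act G) = {(i, {}, {}) | i. 4 \<le> i \<and> i < 4 + n}"
proof (intro equalityI subsetI)
  fix x assume "x \<in> fixed_points G (rep_carrier G K2 K1 L n) (rep_act G)"
  then have x: "x \<in> rep_carrier G K2 K1 L n" and fixed: "stabilizer G (rep_act G) x = carrier G"
    unfolding fixed_points_def by auto
  from x show "x \<in> {(i, {}, {}) | i. 4 \<le> i \<and> i < 4 + n}"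
  proof (cases rule: rep_carrier_cases)
    case (coset i H t)
    have summand: "i \<le> 3" "H \<in> K2 \<union> K1 \<union> L"
      using coset_summandD[OF coset(3)] by auto
    have "conjugate G t H = carrier G"
      using fixed coset(1) rep_stabilizer_coset[OF bspec[OF subgroups summand(2)] coset(2) summand(1)] by simp
    then have "H = carrier G"
      using conjugate_eq_carrier_iff[OF coset_summand_subset[OF coset(3)] coset(2)] by simp
    then show ?thesis
      using proper summand(2) by simp
  qed simp
next
  fix x :: "nat \<times> 'a set \<times> 'a set" assume "x \<in> {(i, {}, {}) | i. 4 \<le> i \<and> i < 4 + n}"
  then show "x \<in> fixed_points G (rep_carrier G K2 K1 L n) (rep_act G)"
    unfolding fixed_points_def using rep_carrier_pointI rep_stabilizer_point by auto
qed

lemma rep_fixed_points_empty_iff: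
  assumes "carrier G \<notin> K2 \<union> K1 \<union> L"
  shows "fixed_points G (rep_carrier G K2 K1 L n) (rep_act G) = {} \<longleftrightarrow> n = 0"
  using rep_fixed_points[OF assms] by auto

lemma rep_has_two_fixed_points_iff:
  assumes "carrier G \<notin> K2 \<union> K1 \<union> L"
  shows "has_two_fixed_points G (rep_carrier G K2 K1 L n) (rep_act G) \<longleftrightarrow> 2 \<le> n"
proof
  assume "has_two_fixed_points G (rep_carrier G K2 K1 L n) (rep_act G)"
  then obtain z1 z2 where "z1 \<in> fixed_points G (rep_carrier G K2 K1 L n) (rep_act G)"
    "z2 \<in> fixed_points G (rep_carrier G K2 K1 L n) (rep_act G)" "z1 \<noteq> z2"
    unfolding has_two_fixed_points_def by blast
  from this[unfolded rep_fixed_points[OF assms]] show "2 \<le> n"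
    by auto
next
  assume "2 \<le> n"
  then have "(4, {}, {}) \<in> fixed_points G (rep_carrier G K2 K1 L n) (rep_act G)"
    "(5, {}, {}) \<in> fixed_points G (rep_carrier G K2 K1 L n) (rep_act G)"
    unfolding rep_fixed_points[OF assms] by auto
  moreover have "(4::nat, {}, {}) \<noteq> (5, {} :: 'a set, {} :: 'a set)"
    by simp
  ultimately show "has_two_fixed_points G (rep_carrier G K2 K1 L n) (rep_act G)"
    unfolding has_two_fixed_points_def by blast
qed

end

end

section \<open>Classification\<close>

locale conjugacy_class_representatives = group G for G (structure) +
  fixes \<G> :: "'a set set"
  assumes representatives: "\<forall>H\<in>\<G>. subgroup H G \<and> H \<noteq> carrier G \<and> \<not> H \<lhd> G"
    and representatives_unique: "\<forall>H. subgroup H G \<and> H \<noteq> carrier G \<and> \<not> H \<lhd> G \<longrightarrow>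
                                   (\<exists>!K. K \<in> \<G> \<and> conjugate_subgroups G K H)"
begin

definition proper_normal_subgroups :: "'a set set" where
  "proper_normal_subgroups = {N. N \<lhd> G \<and> N \<noteq> carrier G}"

lemma representativeD:
  "H \<in> \<G> \<Longrightarrow> subgroup H G \<and> H \<subseteq> carrier G \<and> H \<noteq> carrier G \<and> \<not> H \<lhd> G"
  using representatives subgroup.subset by blast

lemma proper_normal_subgroupD:
  "N \<in> proper_normal_subgroups \<Longrightarrow> N \<lhd> G \<and> subgroup N G \<and> N \<subseteq> carrier G \<and> N \<noteq> carrier G"
  unfolding proper_normal_subgroups_def using normal_imp_subgroup subgroup.subset by blast

lemma proper_subgroup_cases:
  assumes "subgroup H G" "H \<noteq> carrier G"
  shows "H \<in> proper_normal_subgroups \<or> (\<exists>K\<in>\<G>. H \<in> conjugates G K)"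
proof (cases "H \<lhd> G")
  case False
  then obtain K where "K \<in> \<G>" "conjugate_subgroups G K H"
    using representatives_unique assms by blast
  then show ?thesis
    using conjugate_subgroups_iff representativeD by blast
qed (use assms in \<open>simp add: proper_normal_subgroups_def\<close>)

lemma conjugate_representatives_eq:
  assumes H: "H \<in> \<G>" and H': "H' \<in> \<G>" and t: "t \<in> carrier G" and t': "t' \<in> carrier G"
    and eq: "conjugate G t H = conjugate G t' H'"
  shows "H = H'"
proof -
  have "H' = conjugate G (inv t') (conjugate G t H)"
    using eq conjugate_inv_cancel representativeD[OF H'] t' by simp
  also have "\<dots> = conjugate G (inv t' \<otimes> t) H"
    using conjugate_mult t t' by simp
  finally have "conjugate_subgroups G H H'"
    using conjugate_subgroups_iff representativeD[OF H] t t' unfolding conjugates_def by blast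
  moreover have "conjugate_subgroups G H' H'"
    using conjugate_subgroups_iff representativeD[OF H'] conjugate_one[of H'] unfolding conjugates_def
    by (metis image_eqI one_closed)
  ultimately show ?thesis
    using representatives_unique representativeD[OF H'] H H' by blast
qed

lemma conjugate_representative_not_normal:
  assumes H: "H \<in> \<G>" and N: "N \<lhd> G" and t: "t \<in> carrier G"
  shows "conjugate G t H \<noteq> N"
proof
  assume "conjugate G t H = N"
  then have "H = conjugate G (inv t) N"
    using conjugate_inv_cancel representativeD[OF H] t by metis
  then show False
    using conjugate_normal[OF N] t representativeD[OF H] N by simp
qed

lemma conjugate_eq_imp_eq:
  assumes "H \<in> \<G> \<union> proper_normal_subgroups" "H' \<in> \<G> \<union> proper_normal_subgroups"
    and t: "t \<in> carrier G" and t': "t' \<in> carrier G" and eq: "conjugate G t H = conjugate G t' H'"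
  shows "H = H'"
  using assms conjugate_representatives_eq conjugate_representative_not_normal
    conjugate_normal proper_normal_subgroupD by (metis UnE)

lemma representatives_normal_disjoint: "\<G> \<inter> proper_normal_subgroups = {}"
  using representativeD proper_normal_subgroupD by blast

lemma summand_subgroups:
  "K2 \<subseteq> \<G> \<Longrightarrow> K1 \<subseteq> \<G> \<Longrightarrow> L \<subseteq> proper_normal_subgroups \<Longrightarrow> \<forall>H\<in>K2 \<union> K1 \<union> L. subgroup H G"
  using representativeD proper_normal_subgroupD by blast

lemma summands_proper:
  "K2 \<subseteq> \<G> \<Longrightarrow> K1 \<subseteq> \<G> \<Longrightarrow> L \<subseteq> proper_normal_subgroups \<Longrightarrow> carrier G \<notin> K2 \<union> K1 \<union> L"
  using representativeD proper_normal_subgroupD by blast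

end

locale classified_act = conjugacy_class_representatives +
  fixes A :: "'c set" and act :: "'a \<Rightarrow> 'c \<Rightarrow> 'c"
  assumes act: "is_act G A act"
begin

definition occurring :: "'a set set" where
  "occurring = {H \<in> \<G>. \<exists>a\<in>A. stabilizer G act a \<in> conjugates G H}"

definition occurring_twice :: "'a set set" where
  "occurring_twice = {H \<in> \<G>. \<exists>a\<in>A. \<exists>b\<in>A. b \<notin> orbit G act a \<and>
                         stabilizer G act a \<in> conjugates G H \<and> stabilizer G act b \<in> conjugates G H}"

definition normal_stabilizers :: "'a set set" where
  "normal_stabilizers = {N \<in> proper_normal_subgroups. \<exists>a\<in>A. stabilizer G act a = N}"

abbreviation fixed_point_free_rep :: "(nat \<times> 'a set \<times> 'a set) set" where
  "fixed_point_free_rep \<equiv> rep_carrier G occurring_twice (occurring - occurring_twice) normal_stabilizers 0"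

abbreviation rep_with_fixed_points :: "nat \<Rightarrow> (nat \<times> 'a set \<times> 'a set) set" where
  "rep_with_fixed_points n \<equiv> rep_carrier G {} occurring normal_stabilizers n"

lemma occurring_twice_subset: "occurring_twice \<subseteq> occurring"
  unfolding occurring_def occurring_twice_def by blast

lemma occurring_subset: "occurring \<subseteq> \<G>"
  unfolding occurring_def by blast

lemma normal_stabilizers_subset: "normal_stabilizers \<subseteq> proper_normal_subgroups"
  unfolding normal_stabilizers_def by blast

lemma stabilizer_cases:
  assumes a: "a \<in> A"
  shows "stabilizer G act a = carrier G \<or> stabilizer G act a \<in> normal_stabilizers \<or>
         (\<exists>H\<in>occurring. stabilizer G act a \<in> conjugates G H)"
proof (cases "stabilizer G act a = carrier G")
  case False
  then have "stabilizer G act a \<in> proper_normal_subgroups \<or>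
             (\<exists>H\<in>\<G>. stabilizer G act a \<in> conjugates G H)"
    using proper_subgroup_cases act_stabilizer_subgroup[OF act a] by blast
  then show ?thesis
    unfolding normal_stabilizers_def occurring_def using a by blast
qed simp

lemma stabilizer_conjugate_in_orbit:
  assumes a: "a \<in> A" and H: "H \<subseteq> carrier G" and stab: "stabilizer G act a \<in> conjugates G H"
    and t: "t \<in> carrier G"
  shows "\<exists>a'\<in>orbit G act a. stabilizer G act a' = conjugate G t H"
proof -
  obtain g where g: "g \<in> carrier G" and stab_a: "stabilizer G act a = conjugate G g H"
    using stab unfolding conjugates_def by blast
  have "stabilizer G act (act (t \<otimes> inv g) a) = conjugate G (t \<otimes> inv g) (conjugate G g H)"
    using stabilizer_act[OF act _ a] stab_a t g by simp
  also have "\<dots> = conjugate G t H"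
    using conjugate_mult t g by (simp add: m_assoc)
  finally have "stabilizer G act (act (t \<otimes> inv g) a) = conjugate G t H" .
  moreover have "act (t \<otimes> inv g) a \<in> orbit G act a"
    using act_orbit_mem[OF act, of "t \<otimes> inv g" a] t g by simp
  ultimately show ?thesis
    by blast
qed

lemma conjugates_subset_stabilizers:
  assumes "a \<in> A" "H \<subseteq> carrier G" "stabilizer G act a \<in> conjugates G H"
  shows "conjugates G H \<subseteq> stabilizers G A act"
proof
  fix S assume "S \<in> conjugates G H"
  then obtain t where t: "t \<in> carrier G" and S: "S = conjugate G t H"
    unfolding conjugates_def by blast
  obtain a' where "a' \<in> orbit G act a" "stabilizer G act a' = S"
    using stabilizer_conjugate_in_orbit[OF assms t] S by blast
  then show "S \<in> stabilizers G A act"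
    unfolding stabilizers_def using act_orbit_subset[OF act \<open>a \<in> A\<close>] by blast
qed

lemma act_stabilizers:
  "stabilizers G A act = (\<Union>H\<in>occurring \<union> normal_stabilizers. conjugates G H) \<union>
     (if fixed_points G A act = {} then {} else {carrier G})"
proof (intro equalityI subsetI)
  fix S assume "S \<in> stabilizers G A act"
  then obtain a where a: "a \<in> A" and S: "S = stabilizer G act a"
    unfolding stabilizers_def by blast
  from stabilizer_cases[OF a]
  show "S \<in> (\<Union>H\<in>occurring \<union> normal_stabilizers. conjugates G H) \<union>
     (if fixed_points G A act = {} then {} else {carrier G})"
  proof (elim disjE)
    assume "stabilizer G act a = carrier G"
    then have "a \<in> fixed_points G A act"
      unfolding fixed_points_def using a by blast
    then show ?thesis
      using S \<open>stabilizer G act a = carrier G\<close> by auto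
  next
    assume N: "stabilizer G act a \<in> normal_stabilizers"
    then have "stabilizer G act a = conjugate G \<one> (stabilizer G act a)"
      using conjugate_one proper_normal_subgroupD unfolding normal_stabilizers_def by auto
    then show ?thesis
      using N S unfolding conjugates_def by blast
  next
    assume "\<exists>H\<in>occurring. stabilizer G act a \<in> conjugates G H"
    then show ?thesis
      using S by blast
  qed
next
  fix S assume "S \<in> (\<Union>H\<in>occurring \<union> normal_stabilizers. conjugates G H) \<union>
     (if fixed_points G A act = {} then {} else {carrier G})"
  then consider H where "H \<in> occurring" "S \<in> conjugates G H"
    | N where "N \<in> normal_stabilizers" "S \<in> conjugates G N"
    | "fixed_points G A act \<noteq> {}" "S = carrier G"
    by (auto split: if_splits)
  then show "S \<in> stabilizers G A act"
  proof cases
    case 1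
    then show ?thesis
      using conjugates_subset_stabilizers representativeD unfolding occurring_def by blast
  next
    case 2
    then obtain a t where "a \<in> A" "stabilizer G act a = N" "t \<in> carrier G" "S = conjugate G t N"
      unfolding normal_stabilizers_def conjugates_def by blast
    then show ?thesis
      using conjugate_normal proper_normal_subgroupD 2(1)
      unfolding normal_stabilizers_def stabilizers_def by auto
  next
    case 3
    then show ?thesis
      unfolding fixed_points_def stabilizers_def by auto
  qed
qed


lemma twins_into_fixed_point_free_rep:
  assumes no_fixed: "fixed_points G A act = {}"
    and u: "u \<in> A" and v: "v \<in> A" and apart: "v \<notin> orbit G act u"
    and same: "stabilizer G act v = stabilizer G act u"
  shows "\<exists>y1\<in>fixed_point_free_rep. \<exists>y2\<in>fixed_point_free_rep. y1 \<noteq> y2 \<and>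
           stabilizer G act u \<subseteq> stabilizer G (rep_act G) y1 \<and>
           stabilizer G act u \<subseteq> stabilizer G (rep_act G) y2"
proof -
  have "stabilizer G act u \<noteq> carrier G"
    using no_fixed u unfolding fixed_points_def by blast
  then consider "stabilizer G act u \<in> normal_stabilizers"
    | H where "H \<in> occurring" "stabilizer G act u \<in> conjugates G H"
    using stabilizer_cases[OF u] by blast
  then show ?thesis
  proof cases
    case 1
    define N where "N = stabilizer G act u"
    have N: "N \<lhd> G" "subgroup N G" "N \<noteq> carrier G"
      using 1 proper_normal_subgroupD unfolding N_def normal_stabilizers_def by auto
    obtain t where t: "t \<in> carrier G" "\<one> <#\<^bsub>G\<^esub> N \<noteq> t <#\<^bsub>G\<^esub> N"
      using proper_subgroup_other_coset[OF N(2,3)] .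
    have summand: "coset_summand occurring_twice (occurring - occurring_twice) normal_stabilizers 3 N"
      using 1 unfolding coset_summand_def N_def by simp
    have "stabilizer G (rep_act G) (3, N, s <#\<^bsub>G\<^esub> N) = N" if "s \<in> carrier G" for s
      using rep_stabilizer_coset[OF N(2) that] conjugate_normal[OF N(1) that] by simp
    then show ?thesis
      unfolding N_def[symmetric]
      using rep_carrier_cosetI[OF summand one_closed] rep_carrier_cosetI[OF summand t(1)] t
      by (intro bexI[of _ "(3, N, \<one> <#\<^bsub>G\<^esub> N)"] bexI[of _ "(3, N, t <#\<^bsub>G\<^esub> N)"]) auto
  next
    case 2
    then obtain g where g: "g \<in> carrier G" and stab_u: "stabilizer G act u = conjugate G g H"
      unfolding conjugates_def by blast
    have "\<exists>a\<in>A. \<exists>b\<in>A. b \<notin> orbit G act a \<and>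
            stabilizer G act a \<in> conjugates G H \<and> stabilizer G act b \<in> conjugates G H"
      using u v apart same 2(2) by (intro bexI[of _ u] bexI[of _ v]) auto
    then have "H \<in> occurring_twice"
      using 2(1) occurring_subset unfolding occurring_twice_def by blast
    then have "coset_summand occurring_twice (occurring - occurring_twice) normal_stabilizers i H"
      if "i \<in> {0, 1}" for i
      using that unfolding coset_summand_def by simp
    moreover have "stabilizer G (rep_act G) (i, H, g <#\<^bsub>G\<^esub> H) = stabilizer G act u"
      if "i \<le> 3" for i
      using rep_stabilizer_coset[OF _ g that] representativeD occurring_subset 2(1) stab_u by auto
    ultimately show ?thesis
      using rep_carrier_cosetI[OF _ g] by (intro bexI[of _ "(0, H, g <#\<^bsub>G\<^esub> H)"] bexI[of _ "(1, H, g <#\<^bsub>G\<^esub> H)"]) auto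
  qed
qed


lemma occurring_twice_realized:
  assumes H: "H \<in> occurring_twice" and t: "t \<in> carrier G"
  obtains a1 a2 where "a1 \<in> A" "a2 \<in> A" "a1 \<noteq> a2"
    "stabilizer G act a1 = conjugate G t H" "stabilizer G act a2 = conjugate G t H"
proof -
  obtain a b where ab: "a \<in> A" "b \<in> A" "b \<notin> orbit G act a"
    and stabs: "stabilizer G act a \<in> conjugates G H" "stabilizer G act b \<in> conjugates G H"
    using H unfolding occurring_twice_def by blast
  have H_sub: "H \<subseteq> carrier G"
    using H occurring_twice_subset occurring_subset representativeD by blast
  obtain a1 where a1: "a1 \<in> orbit G act a" "stabilizer G act a1 = conjugate G t H"
    using stabilizer_conjugate_in_orbit[OF ab(1) H_sub stabs(1) t] by blast
  obtain a2 where a2: "a2 \<in> orbit G act b" "stabilizer G act a2 = conjugate G t H"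
    using stabilizer_conjugate_in_orbit[OF ab(2) H_sub stabs(2) t] by blast
  have "a1 \<noteq> a2"
  proof
    assume "a1 = a2"
    then have "orbit G act b = orbit G act a"
      using act_orbit_eq[OF act ab(1) a1(1)] act_orbit_eq[OF act ab(2) a2(1)] by simp
    then show False
      using ab(3) act_orbit_refl[OF act ab(2)] by simp
  qed
  moreover have "a1 \<in> A" "a2 \<in> A"
    using a1(1) a2(1) act_orbit_subset[OF act] ab(1,2) by blast+
  ultimately show ?thesis
    using that a1(2) a2(2) by blast
qed

lemma twins_from_fixed_point_free_rep:
  assumes y1: "y1 \<in> fixed_point_free_rep" and y2: "y2 \<in> fixed_point_free_rep"
    and apart: "y2 \<notin> orbit G (rep_act G) y1"
    and same: "stabilizer G (rep_act G) y2 = stabilizer G (rep_act G) y1"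
  shows "\<exists>a1\<in>A. \<exists>a2\<in>A. a1 \<noteq> a2 \<and> stabilizer G (rep_act G) y1 \<subseteq> stabilizer G act a1 \<and>
           stabilizer G (rep_act G) y1 \<subseteq> stabilizer G act a2"
proof -
  have summands: "\<forall>H\<in>occurring_twice \<union> (occurring - occurring_twice) \<union> normal_stabilizers.
                    H \<in> \<G> \<union> proper_normal_subgroups"
    using occurring_subset occurring_twice_subset normal_stabilizers_subset by blast
  obtain i H t where y1_eq: "y1 = (i, H, t <#\<^bsub>G\<^esub> H)" and t: "t \<in> carrier G"
    and summand: "coset_summand occurring_twice (occurring - occurring_twice) normal_stabilizers i H"
    using y1 by (cases rule: rep_carrier_cases) auto
  obtain i' H' t' where y2_eq: "y2 = (i', H', t' <#\<^bsub>G\<^esub> H')" and t': "t' \<in> carrier G"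
    and summand': "coset_summand occurring_twice (occurring - occurring_twice) normal_stabilizers i' H'"
    using y2 by (cases rule: rep_carrier_cases) auto
  have H: "H \<in> \<G> \<union> proper_normal_subgroups" and H': "H' \<in> \<G> \<union> proper_normal_subgroups"
    using summands coset_summandD[OF summand] coset_summandD[OF summand'] by blast+
  then have sub: "subgroup H G" "subgroup H' G"
    using representativeD proper_normal_subgroupD by blast+
  have stab_y1: "stabilizer G (rep_act G) y1 = conjugate G t H"
    using rep_stabilizer_coset[OF sub(1) t] coset_summandD[OF summand] y1_eq by simp
  moreover have "stabilizer G (rep_act G) y2 = conjugate G t' H'"
    using rep_stabilizer_coset[OF sub(2) t'] coset_summandD[OF summand'] y2_eq by simp
  ultimately have "H' = H"
    using conjugate_eq_imp_eq[OF H' H t' t] same by simp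
  moreover have "i \<noteq> i'"
  proof
    assume "i = i'"
    then have "y2 \<in> orbit G (rep_act G) y1"
      using rep_orbit_coset[OF _ subgroup.subset[OF sub(1)] t t'] coset_summandD[OF summand]
        y1_eq y2_eq \<open>H' = H\<close> by simp
    then show False
      using apart by simp
  qed
  moreover have "(occurring - occurring_twice) \<inter> normal_stabilizers = {}"
    using occurring_subset normal_stabilizers_subset representatives_normal_disjoint by blast
  ultimately have "H \<in> occurring_twice"
    using coset_summand_two_tags[OF summand] summand' by simp
  then obtain a1 a2 where "a1 \<in> A" "a2 \<in> A" "a1 \<noteq> a2"
    "stabilizer G act a1 = conjugate G t H" "stabilizer G act a2 = conjugate G t H"
    using occurring_twice_realized[OF _ t] by blast
  then show ?thesis
    using stab_y1 by (intro bexI[of _ a1] bexI[of _ a2]) auto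
qed

lemma geom_equiv_fixed_point_free_rep:
  assumes no_fixed: "fixed_points G A act = {}"
  shows "geom_equiv G A act fixed_point_free_rep (rep_act G)"
proof -
  have summands: "occurring_twice \<subseteq> \<G>" "occurring - occurring_twice \<subseteq> \<G>"
    "normal_stabilizers \<subseteq> proper_normal_subgroups"
    using occurring_subset occurring_twice_subset normal_stabilizers_subset by auto
  have "occurring_twice \<union> (occurring - occurring_twice) \<union> normal_stabilizers =
        occurring \<union> normal_stabilizers"
    using occurring_twice_subset by blast
  then have stabs: "stabilizers G fixed_point_free_rep (rep_act G) = stabilizers G A act"
    using rep_stabilizers[OF summand_subgroups[OF summands]] act_stabilizers no_fixed by simp
  moreover have "stabilizers G A act \<noteq> {}"
    using act_nonempty[OF act] unfolding stabilizers_def by blast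
  ultimately have "fixed_point_free_rep \<noteq> {}"
    unfolding stabilizers_def by auto
  then have rep: "is_act G fixed_point_free_rep (rep_act G)"
    using rep_is_act[OF summand_subgroups[OF summands]] by blast
  show ?thesis
    using geom_equivI[OF act rep hom_separatedI[OF act rep] hom_separatedI[OF rep act]] stabs
      twins_into_fixed_point_free_rep[OF no_fixed] twins_from_fixed_point_free_rep by simp
qed

lemma geom_equiv_rep_with_fixed_points:
  assumes fixed: "fixed_points G A act \<noteq> {}"
    and n: "n = (if has_two_fixed_points G A act then 2 else 1)"
  shows "geom_equiv G A act (rep_with_fixed_points n) (rep_act G)"
proof -
  have summands: "{} \<subseteq> \<G>" "occurring \<subseteq> \<G>" "normal_stabilizers \<subseteq> proper_normal_subgroups"
    using occurring_subset normal_stabilizers_subset by auto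
  note subgroups = summand_subgroups[OF summands] and proper = summands_proper[OF summands]
  have stabs: "stabilizers G (rep_with_fixed_points n) (rep_act G) = stabilizers G A act"
    using rep_stabilizers[OF subgroups] act_stabilizers fixed n by simp
  have "(4, {}, {}) \<in> rep_with_fixed_points n"
    using n by (intro rep_carrier_pointI) auto
  then have rep: "is_act G (rep_with_fixed_points n) (rep_act G)"
    using rep_is_act[OF subgroups] by blast
  have "fixed_points G (rep_with_fixed_points n) (rep_act G) \<noteq> {}"
    using rep_fixed_points_empty_iff[OF subgroups proper] n by simp
  moreover have "has_two_fixed_points G (rep_with_fixed_points n) (rep_act G) \<longleftrightarrow>
                 has_two_fixed_points G A act"
    using rep_has_two_fixed_points_iff[OF subgroups proper] n by simp
  ultimately show ?thesis
    using geom_equivI[OF act rep] hom_separated_into_fixed_point[OF act rep] 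
      hom_separated_into_fixed_point[OF rep act] stabs fixed by simp
qed

lemma geom_equiv_rep_fixed_points:
  assumes summands: "K2 \<subseteq> \<G>" "K1 \<subseteq> \<G>" "L \<subseteq> proper_normal_subgroups"
    and ge: "geom_equiv G A act (rep_carrier G K2 K1 L n) (rep_act G)"
  shows "fixed_points G A act = {} \<longleftrightarrow> n = 0"
    and "has_two_fixed_points G A act \<longleftrightarrow> 2 \<le> n"
  using geom_equiv_fixed_points_nonempty[OF ge] geom_equiv_fixed_points_nonempty[OF geom_equiv_sym[OF ge]]
    geom_equiv_has_two_fixed_points[OF ge] geom_equiv_has_two_fixed_points[OF geom_equiv_sym[OF ge]]
    rep_fixed_points_empty_iff[OF summand_subgroups[OF summands] summands_proper[OF summands]]
    rep_has_two_fixed_points_iff[OF summand_subgroups[OF summands] summands_proper[OF summands]]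
  by blast+


lemma type1_iff:
  "(\<exists>K T L. K \<subseteq> \<G> \<and> T \<subseteq> \<G> \<and> K \<inter> T = {} \<and> L \<subseteq> proper_normal_subgroups \<and>
      geom_equiv G A act (rep_carrier G K T L 0) (rep_act G)) \<longleftrightarrow>
   fixed_points G A act = {}"
proof
  assume "\<exists>K T L. K \<subseteq> \<G> \<and> T \<subseteq> \<G> \<and> K \<inter> T = {} \<and> L \<subseteq> proper_normal_subgroups \<and>
            geom_equiv G A act (rep_carrier G K T L 0) (rep_act G)"
  then obtain K T L where "K \<subseteq> \<G>" "T \<subseteq> \<G>" "L \<subseteq> proper_normal_subgroups"
    "geom_equiv G A act (rep_carrier G K T L 0) (rep_act G)"
    by blast
  then show "fixed_points G A act = {}"
    using geom_equiv_rep_fixed_points(1) by simp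
next
  assume "fixed_points G A act = {}"
  then show "\<exists>K T L. K \<subseteq> \<G> \<and> T \<subseteq> \<G> \<and> K \<inter> T = {} \<and> L \<subseteq> proper_normal_subgroups \<and>
               geom_equiv G A act (rep_carrier G K T L 0) (rep_act G)"
    using geom_equiv_fixed_point_free_rep occurring_subset occurring_twice_subset normal_stabilizers_subset
    by (intro exI[of _ occurring_twice] exI[of _ "occurring - occurring_twice"] exI[of _ normal_stabilizers])
      auto
qed

lemma type2_iff:
  "(\<exists>K L. K \<subseteq> \<G> \<and> L \<subseteq> proper_normal_subgroups \<and>
      geom_equiv G A act (rep_carrier G {} K L 1) (rep_act G)) \<longleftrightarrow>
   fixed_points G A act \<noteq> {} \<and> \<not> has_two_fixed_points G A act"
proof
  assume "\<exists>K L. K \<subseteq> \<G> \<and> L \<subseteq> proper_normal_subgroups \<and>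
            geom_equiv G A act (rep_carrier G {} K L 1) (rep_act G)"
  then obtain K L where "K \<subseteq> \<G>" "L \<subseteq> proper_normal_subgroups"
    "geom_equiv G A act (rep_carrier G {} K L 1) (rep_act G)"
    by blast
  then show "fixed_points G A act \<noteq> {} \<and> \<not> has_two_fixed_points G A act"
    using geom_equiv_rep_fixed_points[of "{}" K L 1] by simp
next
  assume "fixed_points G A act \<noteq> {} \<and> \<not> has_two_fixed_points G A act"
  then show "\<exists>K L. K \<subseteq> \<G> \<and> L \<subseteq> proper_normal_subgroups \<and>
               geom_equiv G A act (rep_carrier G {} K L 1) (rep_act G)"
    using geom_equiv_rep_with_fixed_points[of 1] occurring_subset normal_stabilizers_subset
    by (intro exI[of _ occurring] exI[of _ normal_stabilizers]) auto
qed

lemma type3_iff: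
  "(\<exists>K L. K \<subseteq> \<G> \<and> L \<subseteq> proper_normal_subgroups \<and>
      geom_equiv G A act (rep_carrier G {} K L 2) (rep_act G)) \<longleftrightarrow>
   has_two_fixed_points G A act"
proof
  assume "\<exists>K L. K \<subseteq> \<G> \<and> L \<subseteq> proper_normal_subgroups \<and>
            geom_equiv G A act (rep_carrier G {} K L 2) (rep_act G)"
  then obtain K L where "K \<subseteq> \<G>" "L \<subseteq> proper_normal_subgroups"
    "geom_equiv G A act (rep_carrier G {} K L 2) (rep_act G)"
    by blast
  then show "has_two_fixed_points G A act"
    using geom_equiv_rep_fixed_points[of "{}" K L 2] by simp
next
  assume two: "has_two_fixed_points G A act"
  then have "fixed_points G A act \<noteq> {}"
    unfolding has_two_fixed_points_def by blast
  then show "\<exists>K L. K \<subseteq> \<G> \<and> L \<subseteq> proper_normal_subgroups \<and>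
               geom_equiv G A act (rep_carrier G {} K L 2) (rep_act G)"
    using geom_equiv_rep_with_fixed_points[of 2] two occurring_subset normal_stabilizers_subset
    by (intro exI[of _ occurring] exI[of _ normal_stabilizers]) auto
qed

end

theorem theorem3p21:
  fixes S :: "('g, 'm) monoid_scheme"
    and \<G> :: "'g set set"
    and A :: "'a set" and actA :: "'g \<Rightarrow> 'a \<Rightarrow> 'a"
  assumes grp: "group S"
    and \<G>_sub: "\<forall>G\<in>\<G>. subgroup G S \<and> G \<noteq> carrier S \<and> \<not> normal G S"
    and \<G>_rep: "\<forall>H. subgroup H S \<and> H \<noteq> carrier S \<and> \<not> normal H S \<longrightarrow>
                   (\<exists>!G. G \<in> \<G> \<and> conjugate_subgroups S G H)"
    and act: "is_act S A actA"
  defines "\<N> \<equiv> {N. normal N S \<and> N \<noteq> carrier S}"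
  shows
    "let type1 = (\<exists>K T L. K \<subseteq> \<G> \<and> T \<subseteq> \<G> \<and> K \<inter> T = {} \<and> L \<subseteq> \<N> \<and>
                    geom_equiv S A actA (rep_carrier S K T L 0) (rep_act S));
         type2 = (\<exists>K L. K \<subseteq> \<G> \<and> L \<subseteq> \<N> \<and>
                    geom_equiv S A actA (rep_carrier S {} K L 1) (rep_act S));
         type3 = (\<exists>K L. K \<subseteq> \<G> \<and> L \<subseteq> \<N> \<and>
                    geom_equiv S A actA (rep_carrier S {} K L 2) (rep_act S))
     in (type1 \<and> \<not> type2 \<and> \<not> type3) \<or> (\<not> type1 \<and> type2 \<and> \<not> type3) \<or>
        (\<not> type1 \<and> \<not> type2 \<and> type3)"
proof -
  interpret classified_act S \<G> A actA
    using grp \<G>_sub \<G>_rep act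
    by (simp add: classified_act_def classified_act_axioms_def conjugacy_class_representatives_def
        conjugacy_class_representatives_axioms_def)
  have "has_two_fixed_points S A actA \<Longrightarrow> fixed_points S A actA \<noteq> {}"
    unfolding has_two_fixed_points_def by blast
  then show ?thesis
    unfolding Let_def \<N>_def type1_iff[unfolded proper_normal_subgroups_def]
      type2_iff[unfolded proper_normal_subgroups_def] type3_iff[unfolded proper_normal_subgroups_def]
    by blast
qed

end
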